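(* Let $\mathbb{A}$ be a CPO with set of maximal elements $A$, and $\mathbb{B}$ a sized CPO with set of maximal elements $B$ and size function $s$. Let $h:\mathbb{A}\times\mathbb{B}^m\to\mathbb{B}$ and $g_i:\mathbb{A}\to\mathbb{A}$ ($i=1,\ldots,m$) be regular. Suppose that $s(h(x,y_1,\ldots,y_m))>\min_{i=1,\ldots,m}s(y_i)$ for all $x\in A$ and all $y_1,\ldots,y_m\in\mathbb{B}$ such that some $y_k$ is non-maximal. Then the endofunction $F^*:\mathbb{B}^{\mathbb{A}}\to\mathbb{B}^{\mathbb{A}}$ defined by $F^*(f)(x)=h(x,f(g_1(x)),\ldots,f(g_m(x)))$ has a least fixpoint $f^*$. Moreover, $f^*$ is regular, and its restriction $f^*|_A$ belongs to $B^A$ and is the unique function $u\in B^A$ satisfying $u(x)=h(x,u(g_1(x)),\ldots,u(g_m(x)))$ for all $x\in A$.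
   Context: A CPO is a partial order with a least element in which every directed set has a supremum; a function between CPOs is continuous if it maps directed sets to directed sets and preserves their suprema; products and function spaces $\mathbb{B}^{X}$ are ordered componentwise/pointwise. For an ordinal $\zeta$, $\mathrm{On}(\zeta)$ is the set of ordinals $\le\zeta$. A sized CPO is a tuple $\langle\mathbb{B},\zeta,s,\mathtt{cut}\rangle$ where $\mathbb{B}$ is a CPO, $\zeta$ an ordinal, $s:\mathbb{B}\to\mathrm{On}(\zeta)$ and $\mathtt{cut}:\mathrm{On}(\zeta)\times\mathbb{B}\to\mathbb{B}$, such that: $s$ is surjective and continuous; $s(x)=\zeta$ iff $x$ is maximal; $\mathtt{cut}$ is monotone in both arguments; $s(\mathtt{cut}(\alpha,x))=\alpha$ if $s(x)>\alpha$; $\mathtt{cut}(\alpha,x)=x$ if $s(x)\le\alpha$. A function between CPOs is regular if it is monotone and maps maximal elements to maximal elements; a function $h:S\times\mathbb{A}'\to\mathbb{B}'$ with $S$ a set is regular if $y\mapsto h(x,y)$ is regular for each $x\in S$. *)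

theory Defs
  imports Main
begin

definition po_on :: "'a set \<Rightarrow> ('a \<Rightarrow> 'a \<Rightarrow> bool) \<Rightarrow> bool" where
  "po_on C le \<longleftrightarrow> (\<forall>x\<in>C. le x x) \<and>
     (\<forall>x\<in>C. \<forall>y\<in>C. le x y \<and> le y x \<longrightarrow> x = y) \<and>
     (\<forall>x\<in>C. \<forall>y\<in>C. \<forall>z\<in>C. le x y \<and> le y z \<longrightarrow> le x z)"

definition directed_on :: "'a set \<Rightarrow> ('a \<Rightarrow> 'a \<Rightarrow> bool) \<Rightarrow> 'a set \<Rightarrow> bool" where
  "directed_on C le D \<longleftrightarrow> D \<subseteq> C \<and> D \<noteq> {} \<and>
     (\<forall>x\<in>D. \<forall>y\<in>D. \<exists>z\<in>D. le x z \<and> le y z)"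

definition is_sup_on :: "'a set \<Rightarrow> ('a \<Rightarrow> 'a \<Rightarrow> bool) \<Rightarrow> 'a set \<Rightarrow> 'a \<Rightarrow> bool" where
  "is_sup_on C le D s \<longleftrightarrow> s \<in> C \<and> (\<forall>x\<in>D. le x s) \<and>
     (\<forall>u\<in>C. (\<forall>x\<in>D. le x u) \<longrightarrow> le s u)"

definition cpo_on :: "'a set \<Rightarrow> ('a \<Rightarrow> 'a \<Rightarrow> bool) \<Rightarrow> bool" where
  "cpo_on C le \<longleftrightarrow> po_on C le \<and> (\<exists>b\<in>C. \<forall>x\<in>C. le b x) \<and>
     (\<forall>D. directed_on C le D \<longrightarrow> (\<exists>s. is_sup_on C le D s))"

definition continuous_betw ::
  "'a set \<Rightarrow> ('a \<Rightarrow> 'a \<Rightarrow> bool) \<Rightarrow> 'b set \<Rightarrow> ('b \<Rightarrow> 'b \<Rightarrow> bool) \<Rightarrow> ('a \<Rightarrow> 'b) \<Rightarrow> bool" where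
  "continuous_betw C le C' le' f \<longleftrightarrow> f ` C \<subseteq> C' \<and>
     (\<forall>D. directed_on C le D \<longrightarrow> directed_on C' le' (f ` D) \<and>
        (\<forall>s. is_sup_on C le D s \<longrightarrow> is_sup_on C' le' (f ` D) (f s)))"

definition maximal_on :: "'a set \<Rightarrow> ('a \<Rightarrow> 'a \<Rightarrow> bool) \<Rightarrow> 'a \<Rightarrow> bool" where
  "maximal_on C le x \<longleftrightarrow> x \<in> C \<and> (\<forall>y\<in>C. le x y \<longrightarrow> y = x)"

definition regular_on ::
  "'a set \<Rightarrow> ('a \<Rightarrow> 'a \<Rightarrow> bool) \<Rightarrow> 'b set \<Rightarrow> ('b \<Rightarrow> 'b \<Rightarrow> bool) \<Rightarrow> ('a \<Rightarrow> 'b) \<Rightarrow> bool" where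
  "regular_on C le C' le' f \<longleftrightarrow> f ` C \<subseteq> C' \<and>
     (\<forall>x\<in>C. \<forall>y\<in>C. le x y \<longrightarrow> le' (f x) (f y)) \<and>
     (\<forall>x. maximal_on C le x \<longrightarrow> maximal_on C' le' (f x))"

text \<open>Sized CPO on the whole type 'b; the ordinals On(zeta) are represented by the
  initial segment {..zeta} of a well-ordered type 'o.\<close>
definition sized_cpo ::
  "('b \<Rightarrow> 'b \<Rightarrow> bool) \<Rightarrow> 'o::wellorder \<Rightarrow> ('b \<Rightarrow> 'o) \<Rightarrow> ('o \<Rightarrow> 'b \<Rightarrow> 'b) \<Rightarrow> bool" where
  "sized_cpo le \<zeta> s ct \<longleftrightarrow> cpo_on UNIV le \<and>
     s ` UNIV = {..\<zeta>} \<and>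
     continuous_betw UNIV le {..\<zeta>} (\<le>) s \<and>
     (\<forall>x. s x = \<zeta> \<longleftrightarrow> maximal_on UNIV le x) \<and>
     (\<forall>\<alpha> \<beta> x y. \<alpha> \<le> \<zeta> \<longrightarrow> \<beta> \<le> \<zeta> \<longrightarrow> \<alpha> \<le> \<beta> \<longrightarrow> le x y \<longrightarrow> le (ct \<alpha> x) (ct \<beta> y)) \<and>
     (\<forall>\<alpha> x. \<alpha> \<le> \<zeta> \<longrightarrow> \<alpha> < s x \<longrightarrow> s (ct \<alpha> x) = \<alpha>) \<and>
     (\<forall>\<alpha> x. \<alpha> \<le> \<zeta> \<longrightarrow> s x \<le> \<alpha> \<longrightarrow> ct \<alpha> x = x)"

text \<open>Product order on A x B^m, with B^m represented as lists of length m.\<close>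
definition prod_list_carrier :: "nat \<Rightarrow> ('a \<times> 'b list) set" where
  "prod_list_carrier m = {(x, ys). length ys = m}"

definition prod_list_le ::
  "('a \<Rightarrow> 'a \<Rightarrow> bool) \<Rightarrow> ('b \<Rightarrow> 'b \<Rightarrow> bool) \<Rightarrow> 'a \<times> 'b list \<Rightarrow> 'a \<times> 'b list \<Rightarrow> bool" where
  "prod_list_le leA leB p q \<longleftrightarrow> leA (fst p) (fst q) \<and> list_all2 leB (snd p) (snd q)"

definition fun_le :: "('b \<Rightarrow> 'b \<Rightarrow> bool) \<Rightarrow> ('a \<Rightarrow> 'b) \<Rightarrow> ('a \<Rightarrow> 'b) \<Rightarrow> bool" where
  "fun_le le f g \<longleftrightarrow> (\<forall>x. le (f x) (g x))"

end

theory Submission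
  imports Defs
begin

text \<open>The functional \<open>F\<^sup>*\<close> is monotone on the pointwise CPO of functions, so it has a
  least fixpoint \<open>f\<^sup>*\<close>; fixpoint induction shows that \<open>f\<^sup>*\<close> is monotone and lies below every
  solution on the maximal points. On a maximal argument \<open>f\<^sup>*\<close> is itself maximal: otherwise pick a
  maximal \<open>x\<close> at which \<open>f\<^sup>* x\<close> has least size; as \<open>f\<^sup>* x\<close> is not maximal, neither is some
  \<open>f\<^sup>*(g\<^sub>i x)\<close>, and the size hypothesis on \<open>h\<close> makes \<open>f\<^sup>*(g\<^sub>i x)\<close> strictly smaller than
  \<open>f\<^sup>* x\<close>, although \<open>g\<^sub>i x\<close> is maximal. Being maximal and below every solution, \<open>f\<^sup>*\<close>
  coincides with every solution on the maximal points.\<close>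

text \<open>Only the values on chains matter; on \<open>{}\<close> this is the least element.\<close>
definition cpo_lub :: "('a \<Rightarrow> 'a \<Rightarrow> bool) \<Rightarrow> 'a set \<Rightarrow> 'a" where
  "cpo_lub le D = (if D = {} then (SOME b. \<forall>x. le b x) else (SOME t. is_sup_on UNIV le D t))"

lemma partial_function_definitions_cpo_lub:
  assumes "cpo_on UNIV le"
  shows "partial_function_definitions le (cpo_lub le)"
proof -
  have po: "po_on UNIV le" and bot: "\<exists>b. \<forall>x. le b x"
    and dir: "\<And>D. directed_on UNIV le D \<Longrightarrow> \<exists>t. is_sup_on UNIV le D t"
    using assms unfolding cpo_on_def by auto
  have refl: "\<And>x. le x x" using po unfolding po_on_def by auto
  have sup: "is_sup_on UNIV le A (cpo_lub le A)"
    if "Complete_Partial_Order.chain le A" "A \<noteq> {}" for A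
  proof -
    have "directed_on UNIV le A"
      unfolding directed_on_def using that refl by (auto dest: chainD)
    then show ?thesis
      using someI_ex[OF dir] that(2) by (simp add: cpo_lub_def)
  qed
  show ?thesis
  proof
    fix x show "le x x" by (rule refl)
  next
    fix x y z assume "le x y" "le y z" then show "le x z"
      using po unfolding po_on_def by blast
  next
    fix x y assume "le x y" "le y x" then show "x = y"
      using po unfolding po_on_def by blast
  next
    fix A x assume "Complete_Partial_Order.chain le A" "x \<in> A"
    then show "le x (cpo_lub le A)"
      using sup[of A] unfolding is_sup_on_def by blast
  next
    fix A z assume A: "Complete_Partial_Order.chain le A" and z: "\<And>x. x \<in> A \<Longrightarrow> le x z"
    show "le (cpo_lub le A) z"
    proof (cases "A = {}")
      case True then show ?thesis using someI_ex[OF bot] by (simp add: cpo_lub_def)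
    next
      case False then show ?thesis using sup[OF A] z unfolding is_sup_on_def by blast
    qed
  qed
qed
context partial_function_definitions
begin

lemma fixp_fun_unfold: "monotone le_fun le_fun F \<Longrightarrow> fixp_fun F = F (fixp_fun F)"
  by (rule ccpo.fixp_unfold[OF ccpo])

lemma fixp_fun_least: "monotone le_fun le_fun F \<Longrightarrow> F f = f \<Longrightarrow> le_fun (fixp_fun F) f"
  by (rule ccpo.fixp_lowerbound[OF ccpo]) (simp_all add: fun_ord_def leq_refl)

lemma admissible_fun_below_on: "admissible (\<lambda>f. \<forall>x\<in>S. leq (f x) (u x))"
proof (rule ccpo.admissibleI, intro ballI)
  fix A x assume "Complete_Partial_Order.chain le_fun A" "\<forall>f\<in>A. \<forall>x\<in>S. leq (f x) (u x)" "x \<in> S"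
  then show "leq (lub_fun A x) (u x)"
    unfolding fun_lub_def by (blast intro: lub_least chain_fun)
qed

lemma admissible_fun_monotone: "admissible (\<lambda>f. \<forall>x y. R x y \<longrightarrow> leq (f x) (f y))"
proof (rule ccpo.admissibleI, intro allI impI)
  fix A x y assume A: "Complete_Partial_Order.chain le_fun A"
    and mono: "\<forall>f\<in>A. \<forall>x y. R x y \<longrightarrow> leq (f x) (f y)" and "R x y"
  have "leq (f x) (lub {z. \<exists>f\<in>A. z = f y})" if "f \<in> A" for f
  proof (rule leq_trans)
    show "leq (f x) (f y)" using mono \<open>R x y\<close> that by blast
    show "leq (f y) (lub {z. \<exists>f\<in>A. z = f y})"
      by (rule lub_upper[OF chain_fun[OF A]]) (use that in blast)
  qed
  then show "leq (lub_fun A x) (lub_fun A y)"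
    unfolding fun_lub_def by (auto intro: lub_least[OF chain_fun[OF A]])
qed

lemma fixp_fun_below_on:
  assumes "monotone le_fun le_fun F"
    and "\<And>f. \<forall>x\<in>S. leq (f x) (u x) \<Longrightarrow> \<forall>x\<in>S. leq (F f x) (u x)"
  shows "\<forall>x\<in>S. leq (fixp_fun F x) (u x)"
  by (rule ccpo.fixp_induct[OF ccpo admissible_fun_below_on assms(1)])
    (auto simp: assms(2) fun_lub_def intro: lub_least[OF chain_empty])

lemma fixp_fun_monotone:
  assumes "monotone le_fun le_fun F"
    and "\<And>f. \<forall>x y. R x y \<longrightarrow> leq (f x) (f y) \<Longrightarrow> \<forall>x y. R x y \<longrightarrow> leq (F f x) (F f y)"
  shows "\<forall>x y. R x y \<longrightarrow> leq (fixp_fun F x) (fixp_fun F y)"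
  by (rule ccpo.fixp_induct[OF ccpo admissible_fun_monotone assms(1)])
    (simp_all add: assms(2) fun_lub_def leq_refl)

end

lemma maximal_on_prod_list:
  assumes "maximal_on UNIV leA x" "length ys = m" "\<forall>y\<in>set ys. maximal_on UNIV leB y"
  shows "maximal_on (prod_list_carrier m) (prod_list_le leA leB) (x, ys)"
  unfolding maximal_on_def
proof (intro conjI ballI impI)
  show "(x, ys) \<in> prod_list_carrier m" using assms(2) by (simp add: prod_list_carrier_def)
next
  fix p assume "p \<in> prod_list_carrier m" "prod_list_le leA leB (x, ys) p"
  then obtain x' ys' where p: "p = (x', ys')" "leA x x'" "list_all2 leB ys ys'"
    by (cases p) (simp add: prod_list_le_def)
  have "x' = x" using assms(1) p(2) unfolding maximal_on_def by simp
  moreover have "ys' = ys"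
  proof (rule nth_equalityI)
    show "length ys' = length ys" using p(3) by (simp add: list_all2_lengthD)
    fix k assume "k < length ys'"
    then show "ys' ! k = ys ! k"
      using p(3) assms(3) unfolding maximal_on_def list_all2_conv_all_nth by auto
  qed
  ultimately show "p = (x, ys)" using p(1) by simp
qed

lemma regular_on_prod_list_maximal:
  assumes "regular_on (prod_list_carrier m) (prod_list_le leA leB) C le h"
    and "maximal_on UNIV leA x" "length ys = m" "\<forall>y\<in>set ys. maximal_on UNIV leB y"
  shows "maximal_on C le (h (x, ys))"
  using assms(1) maximal_on_prod_list[OF assms(2-4)] unfolding regular_on_def by blast

lemma regular_on_prod_list_mono:
  assumes "regular_on (prod_list_carrier m) (prod_list_le leA leB) C le h"
    and "leA x x'" "length ys = m" "list_all2 leB ys ys'"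
  shows "le (h (x, ys)) (h (x', ys'))"
proof -
  have "length ys' = m" using assms(3,4) by (simp add: list_all2_lengthD)
  then show ?thesis
    using assms unfolding regular_on_def prod_list_carrier_def prod_list_le_def by simp
qed

definition rec_step :: "('a \<times> 'b list \<Rightarrow> 'c) \<Rightarrow> (nat \<Rightarrow> 'a \<Rightarrow> 'a) \<Rightarrow> nat \<Rightarrow> ('a \<Rightarrow> 'b) \<Rightarrow> 'a \<Rightarrow> 'c"
  where "rec_step h g m f x = h (x, map (\<lambda>i. f (g i x)) [0..<m])"

context
  fixes leA :: "'a \<Rightarrow> 'a \<Rightarrow> bool" and leB :: "'b \<Rightarrow> 'b \<Rightarrow> bool"
    and h :: "'a \<times> 'b list \<Rightarrow> 'b" and g :: "nat \<Rightarrow> 'a \<Rightarrow> 'a" and m :: nat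
  assumes h_reg: "regular_on (prod_list_carrier m) (prod_list_le leA leB) UNIV leB h"
begin

lemma rec_step_monotone:
  assumes "\<And>x. leA x x"
  shows "monotone (fun_ord leB) (fun_ord leB) (rec_step h g m)"
  by (rule monotoneI)
    (auto simp: rec_step_def fun_ord_def assms list_all2_conv_all_nth
      intro!: regular_on_prod_list_mono[OF h_reg])

lemma rec_step_preserves_monotone:
  assumes "\<And>i x y. i < m \<Longrightarrow> leA x y \<Longrightarrow> leA (g i x) (g i y)"
    and "\<forall>x y. leA x y \<longrightarrow> leB (f x) (f y)"
  shows "\<forall>x y. leA x y \<longrightarrow> leB (rec_step h g m f x) (rec_step h g m f y)"
  using assms
  by (auto simp: rec_step_def list_all2_conv_all_nth intro!: regular_on_prod_list_mono[OF h_reg])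

lemma rec_step_below_solution:
  assumes "\<And>x. leA x x"
    and "\<And>i x. i < m \<Longrightarrow> x \<in> S \<Longrightarrow> g i x \<in> S"
    and "\<forall>x\<in>S. u x = rec_step h g m u x"
    and "\<forall>x\<in>S. leB (f x) (u x)"
  shows "\<forall>x\<in>S. leB (rec_step h g m f x) (u x)"
  using assms
  by (auto simp: rec_step_def list_all2_conv_all_nth intro!: regular_on_prod_list_mono[OF h_reg])

lemma rec_solution_maximal:
  fixes s :: "'b \<Rightarrow> 'o::wellorder"
  assumes s_maximal: "\<And>y. s y = \<zeta> \<longleftrightarrow> maximal_on UNIV leB y"
    and s_le: "\<And>y. s y \<le> \<zeta>"
    and g_maximal: "\<And>i x. i < m \<Longrightarrow> maximal_on UNIV leA x \<Longrightarrow> maximal_on UNIV leA (g i x)"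
    and h_size: "\<And>x ys. maximal_on UNIV leA x \<Longrightarrow> length ys = m \<Longrightarrow>
        (\<exists>k<m. \<not> maximal_on UNIV leB (ys ! k)) \<Longrightarrow> s (h (x, ys)) > Min (s ` set ys)"
    and f_eq: "\<And>x. maximal_on UNIV leA x \<Longrightarrow> f x = rec_step h g m f x"
    and x: "maximal_on UNIV leA x"
  shows "maximal_on UNIV leB (f x)"
proof -
  define a0 where "a0 = (LEAST a. \<exists>x. maximal_on UNIV leA x \<and> s (f x) = a)"
  have "\<exists>x0. maximal_on UNIV leA x0 \<and> s (f x0) = a0"
    unfolding a0_def by (rule LeastI_ex) (use x in blast)
  then obtain x0 where x0: "maximal_on UNIV leA x0" "s (f x0) = a0" by blast
  have a0_le: "a0 \<le> s (f y)" if "maximal_on UNIV leA y" for y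
    unfolding a0_def by (rule Least_le) (use that in blast)
  define ys where "ys = map (\<lambda>i. f (g i x0)) [0..<m]"
  have ys_len: "length ys = m" and f_x0: "f x0 = h (x0, ys)"
    using f_eq[OF x0(1)] by (simp_all add: ys_def rec_step_def)
  have "maximal_on UNIV leB (f x0)"
  proof (rule ccontr)
    assume "\<not> maximal_on UNIV leB (f x0)"
    then have nonmax: "\<exists>k<m. \<not> maximal_on UNIV leB (ys ! k)"
      using regular_on_prod_list_maximal[OF h_reg x0(1) ys_len] f_x0 by (metis ys_len in_set_conv_nth)
    then have "Min (s ` set ys) < s (f x0)"
      using h_size[OF x0(1) ys_len] f_x0 by simp
    moreover have "set ys \<noteq> {}" using nonmax ys_len by auto
    moreover have "\<forall>y\<in>set ys. a0 \<le> s y"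
      using a0_le g_maximal x0(1) by (auto simp: ys_def)
    ultimately show False using x0(2) by (auto simp: Min_less_iff not_less[symmetric])
  qed
  then have "a0 = \<zeta>" using x0(2) s_maximal by metis
  then show ?thesis using a0_le[OF x] s_le[of "f x"] s_maximal antisym by metis
qed

end

theorem lemma4p4:
  fixes leA :: "'a \<Rightarrow> 'a \<Rightarrow> bool"
    and leB :: "'b \<Rightarrow> 'b \<Rightarrow> bool"
    and \<zeta> :: "'o::wellorder"
    and s :: "'b \<Rightarrow> 'o"
    and ct :: "'o \<Rightarrow> 'b \<Rightarrow> 'b"
    and m :: nat
    and h :: "'a \<times> 'b list \<Rightarrow> 'b"
    and g :: "nat \<Rightarrow> 'a \<Rightarrow> 'a"
  assumes cpoA: "cpo_on UNIV leA"
    and sizedB: "sized_cpo leB \<zeta> s ct"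
    and h_reg: "regular_on (prod_list_carrier m) (prod_list_le leA leB) UNIV leB h"
    and g_reg: "\<And>i. i < m \<Longrightarrow> regular_on UNIV leA UNIV leA (g i)"
    and h_size: "\<And>x ys. maximal_on UNIV leA x \<Longrightarrow> length ys = m \<Longrightarrow>
        (\<exists>k<m. \<not> maximal_on UNIV leB (ys ! k)) \<Longrightarrow>
        s (h (x, ys)) > Min (s ` set ys)"
  shows "\<exists>fs :: 'a \<Rightarrow> 'b.
     (let F = (\<lambda>f x. h (x, map (\<lambda>i. f (g i x)) [0..<m])) in
       F fs = fs \<and> (\<forall>f. F f = f \<longrightarrow> fun_le leB fs f)) \<and>
     regular_on UNIV leA UNIV leB fs \<and>
     (\<forall>x. maximal_on UNIV leA x \<longrightarrow> maximal_on UNIV leB (fs x)) \<and>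
     (\<forall>u :: 'a \<Rightarrow> 'b.
        (\<forall>x. maximal_on UNIV leA x \<longrightarrow> maximal_on UNIV leB (u x)) \<and>
        (\<forall>x. maximal_on UNIV leA x \<longrightarrow> u x = h (x, map (\<lambda>i. u (g i x)) [0..<m]))
        \<longrightarrow> (\<forall>x. maximal_on UNIV leA x \<longrightarrow> u x = fs x))"
proof -
  interpret B: partial_function_definitions leB "cpo_lub leB"
    using sizedB partial_function_definitions_cpo_lub unfolding sized_cpo_def by blast
  have reflA: "\<And>x. leA x x" using cpoA unfolding cpo_on_def po_on_def by blast
  have s_maximal: "\<And>y. s y = \<zeta> \<longleftrightarrow> maximal_on UNIV leB y" and s_le: "\<And>y. s y \<le> \<zeta>"
    using sizedB unfolding sized_cpo_def by auto
  have g_mono: "\<And>i x y. i < m \<Longrightarrow> leA x y \<Longrightarrow> leA (g i x) (g i y)"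
    and g_maximal: "\<And>i x. i < m \<Longrightarrow> maximal_on UNIV leA x \<Longrightarrow> maximal_on UNIV leA (g i x)"
    using g_reg unfolding regular_on_def by blast+
  let ?F = "rec_step h g m" and ?A = "{x. maximal_on UNIV leA x}"
  have mono: "monotone B.le_fun B.le_fun ?F" by (rule rec_step_monotone[OF h_reg reflA])
  define fs where "fs = B.fixp_fun ?F"
  have fixed: "?F fs = fs" unfolding fs_def by (rule B.fixp_fun_unfold[OF mono, symmetric])
  have least: "fun_le leB fs f" if "?F f = f" for f
    using B.fixp_fun_least[OF mono that] unfolding fs_def fun_le_def fun_ord_def .
  have fs_eq: "fs x = ?F fs x" for x using fixed by simp
  have fs_maximal: "maximal_on UNIV leB (fs x)" if "maximal_on UNIV leA x" for x
    using rec_solution_maximal[where g = g, OF h_reg s_maximal s_le g_maximal h_size fs_eq that] .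
  have fs_mono: "\<forall>x y. leA x y \<longrightarrow> leB (fs x) (fs y)" unfolding fs_def
    by (rule B.fixp_fun_monotone[OF mono rec_step_preserves_monotone[OF h_reg g_mono]])
  have fs_unique: "u x = fs x" if "\<forall>x\<in>?A. u x = ?F u x" "x \<in> ?A" for u x
  proof -
    have "\<forall>x\<in>?A. leB (fs x) (u x)" unfolding fs_def
      by (rule B.fixp_fun_below_on[OF mono rec_step_below_solution[OF h_reg reflA _ that(1)]])
        (simp add: g_maximal)
    then show ?thesis using fs_maximal that(2) unfolding maximal_on_def by blast
  qed
  show ?thesis
    unfolding rec_step_def[symmetric] Let_def regular_on_def
    using fixed least fs_mono fs_maximal fs_unique by blast
qed

end
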